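(* For all integers $n\ge1$ and $d\ge0$, in $K[t]$: $$\tau^n(b_d(t))=l_d^{q^{n-1}}\sum_{d\ge i_1\ge i_2\ge\cdots\ge i_n\ge0}l_{i_1}^{q^{n-2}-q^{n-1}}l_{i_2}^{q^{n-3}-q^{n-2}}\cdots l_{i_{n-1}}^{1-q}\,l_{i_n}^{-1}\,b_{i_n}(t),$$ and consequently $$\sum_{a\in A^+(d)}\frac{a(t)}{a^{q^n}}=l_d^{q^{n-1}-q^n}\sum_{d\ge i_1\ge\cdots\ge i_n\ge0}l_{i_1}^{q^{n-2}-q^{n-1}}\cdots l_{i_{n-1}}^{1-q}\,l_{i_n}^{-1}\,b_{i_n}(t).$$ (For $n=1$ the product of powers of $l_{i_1},\ldots,l_{i_{n-1}}$ is empty and the summand is $l_{i_1}^{-1}b_{i_1}(t)$.)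
   Context: $A=\mathbb{F}_q[\theta]$, $K=\mathbb{F}_q(\theta)$, $A^+(d)$ the monic polynomials of degree $d$; $t$ an indeterminate and $a(t)$ is $a$ with $\theta$ replaced by $t$. $l_0=1$, $l_i=(\theta-\theta^{q^i})l_{i-1}$; $b_0(t)=1$, $b_i(t)=\prod_{k=0}^{i-1}(t-\theta^{q^k})$. $\tau$ is the $\mathbb{F}_q[t]$-linear ring endomorphism of $K[t]$ with $\tau(c)=c^q$ for $c\in K$. *)

theory Defs
  imports "HOL-Computational_Algebra.Polynomial_Factorial" "HOL-Library.FuncSet" "HOL-Library.Cardinality"
begin

text \<open>F_q is a finite field type 'a, q = CARD('a); A = 'a poly; K = 'a poly fract;
  K[t] = 'a poly fract poly.\<close>

definition theta :: "'a::{finite,field} poly fract" where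
  "theta = to_fract [:0, 1:]"

definition lfac :: "nat \<Rightarrow> 'a::{finite,field} poly fract" where
  "lfac i = (\<Prod>k\<in>{1..i}. theta - theta ^ (CARD('a) ^ k))"

definition bpoly :: "nat \<Rightarrow> 'a::{finite,field} poly fract poly" where
  "bpoly i = (\<Prod>k<i. [: - (theta ^ (CARD('a) ^ k)), 1 :])"

definition tau :: "'a::{finite,field} poly fract poly \<Rightarrow> 'a poly fract poly" where
  "tau p = map_poly (\<lambda>c. c ^ CARD('a)) p"

definition monic_deg :: "nat \<Rightarrow> 'a::{finite,field} poly set" where
  "monic_deg d = {a. lead_coeff a = 1 \<and> degree a = d}"

text \<open>a(t): a with theta replaced by t, as an element of K[t]\<close>
definition at_t :: "'a::{finite,field} poly \<Rightarrow> 'a poly fract poly" where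
  "at_t a = map_poly (\<lambda>c. to_fract [:c:]) a"

definition chains :: "nat \<Rightarrow> nat \<Rightarrow> (nat \<Rightarrow> nat) set" where
  "chains n d = {i \<in> {1..n} \<rightarrow>\<^sub>E {0..d}. \<forall>j\<in>{1..<n}. i (Suc j) \<le> i j}"

definition chain_sum :: "nat \<Rightarrow> nat \<Rightarrow> 'a::{finite,field} poly fract poly" where
  "chain_sum n d = (\<Sum>i\<in>chains n d.
     smult ((\<Prod>j\<in>{1..<n}. (lfac (i j) :: 'a poly fract) powi
               (int (CARD('a) ^ (n - 1 - j)) - int (CARD('a) ^ (n - j))))
            * (lfac (i n)) powi (-1))
       (bpoly (i n)))"

end

theory Submission
  imports Defs
begin

text \<open>The twist \<open>\<tau>\<close> is the coefficientwise \<open>q\<close>-th power map, a ring endomorphism of \<open>K[t]\<close>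
  fixing every \<open>a(t)\<close>. Since \<open>\<tau>(b\<^sub>d) (t - \<theta>) = b\<^sub>d\<^sub>+\<^sub>1\<close>, one application gives
  \<open>\<tau>(b\<^sub>d) = l\<^sub>d \<Sum>\<^sub>i\<^sub>\<le>\<^sub>d b\<^sub>i / l\<^sub>i\<close>; iterating and unfolding the nested sums into chains
  \<open>d \<ge> i\<^sub>1 \<ge> \<dots> \<ge> i\<^sub>n\<close> gives the first formula.

  The second formula is \<open>\<tau>\<^sup>n\<close> applied to \<open>\<Sum>\<^sub>a a(t)/a = b\<^sub>d(t)/l\<^sub>d\<close> (sum over monic \<open>a\<close> of
  degree \<open>d\<close>). For this, let \<open>W\<^sub>n\<close> (\<open>at_t_quot_sum n\<close>) be the sum of \<open>b(t)/b\<close> over nonzero \<open>b\<close> of degree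
  \<open>< n\<close>. Scaling by \<open>\<bbbF>\<^sub>q\<^sup>\<times>\<close> gives \<open>W\<^sub>d\<^sub>+\<^sub>1 = W\<^sub>d - \<Sum>\<^sub>a a(t)/a\<close>, and
  \<open>W\<^sub>d\<^sub>+\<^sub>1 = -\<tau>(b\<^sub>d)/l\<^sub>d\<close>: both have degree \<open>\<le> d\<close>, and at \<open>t = \<theta>^q^k\<close>, \<open>k \<le> d\<close>, the
  left side is the power sum \<open>\<Sum> b^(q^k - 1)\<close> over an \<open>\<bbbF>\<^sub>q\<close>-space of dimension \<open>d + 1\<close>,
  which is \<open>-1\<close> for \<open>k = 0\<close> and \<open>0\<close> otherwise, exactly as for the right side.\<close>

section \<open>Finite fields\<close>

lemma card_field_ge_2: "2 \<le> CARD('a::{finite,field})"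
proof -
  have "card {0::'a, 1} \<le> CARD('a)"
    by (rule card_mono) auto
  then show ?thesis
    by simp
qed

lemma power_card_eq_self:
  fixes x :: "'a::{finite,field}"
  shows "x ^ CARD('a) = x"
proof (cases "x = 0")
  case True
  then show ?thesis
    using card_field_ge_2[where 'a='a] by simp
next
  case False
  let ?U = "UNIV - {0::'a}"
  have "bij_betw ((*) x) ?U ?U"
    using False by (intro bij_betwI[where g = "\<lambda>y. y / x"]) auto
  then have "(\<Prod>y\<in>?U. x * y) = \<Prod>?U"
    by (rule prod.reindex_bij_betw)
  then have "x ^ (CARD('a) - 1) * \<Prod>?U = 1 * \<Prod>?U"
    by (simp add: prod.distrib card_Diff_singleton)
  then have "x ^ (CARD('a) - 1) = 1"
    by (subst (asm) mult_cancel_right) simp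
  moreover have "CARD('a) = Suc (CARD('a) - 1)"
    using card_field_ge_2[where 'a='a] by simp
  ultimately show ?thesis
    by (metis power_Suc2 mult_1_left)
qed

lemma of_nat_card_choose_eq_0:
  assumes "0 < k" "k < CARD('a::{finite,field})"
  shows "of_nat (CARD('a) choose k) = (0::'a)"
proof -
  let ?q = "CARD('a)"
  define P :: "'a poly" where "P = [:1, 1:] ^ ?q - monom 1 ?q - 1"
  have "P = 0"
  proof (rule poly_eqI_degree[of UNIV])
    show "poly P x = poly 0 x" for x
      by (simp add: P_def poly_monom power_card_eq_self)
    have "coeff P j = 0" if "?q \<le> j" for j
    proof (cases "j = ?q")
      case False
      then have "coeff ([:1, 1:] ^ ?q :: 'a poly) j = 0"
        using that by (intro coeff_eq_0) (simp add: degree_linear_power)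
      then show ?thesis
        using False that by (simp add: P_def)
    qed (use card_field_ge_2[where 'a='a] in \<open>simp add: P_def coeff_linear_poly_power\<close>)
    then have "degree P < ?q"
      using card_field_ge_2[where 'a='a] by (intro degree_lessI) auto
    then show "degree P < card (UNIV :: 'a set)" "degree 0 < card (UNIV :: 'a set)"
      by simp_all
  qed
  then have "coeff P k = 0"
    by simp
  then show ?thesis
    using assms by (simp add: P_def coeff_linear_poly_power)
qed

lemma prod_diff_additive_subgroup:
  fixes V :: "'a::comm_ring_1 set"
  assumes "\<And>x y. x \<in> V \<Longrightarrow> y \<in> V \<Longrightarrow> x - y \<in> V" and "r \<in> V"
  shows "(\<Prod>s\<in>V - {r}. r - s) = \<Prod>(V - {0})"
proof -
  have "bij_betw (\<lambda>s. r - s) (V - {r}) (V - {0})"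
    using assms by (intro bij_betwI[where g = "\<lambda>u. r - u"]) auto
  then show ?thesis
    by (rule prod.reindex_bij_betw)
qed

text \<open>Lagrange interpolation of \<open>X ^ m\<close> at the points of \<open>V\<close>: the coefficient of
  \<open>X ^ (card V - 1)\<close> is the power sum, because translation invariance of \<open>V\<close> makes every
  \<open>\<Prod>s\<in>V-{r}. r - s\<close> equal to the same nonzero constant \<open>\<alpha>\<close>.\<close>
lemma sum_power_additive_subgroup_eq_0:
  fixes V :: "'a::field set"
  assumes fin: "finite V" and diff: "\<And>x y. x \<in> V \<Longrightarrow> y \<in> V \<Longrightarrow> x - y \<in> V"
    and m: "m + 1 < card V"
  shows "(\<Sum>r\<in>V. r ^ m) = 0"
proof -
  define N where "N = card V"
  define \<alpha> where "\<alpha> = \<Prod>(V - {0})"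
  define Q where "Q r = (\<Prod>s\<in>V - {r}. [:- s, 1:])" for r
  define G where "G = (\<Sum>r\<in>V. smult (r ^ m) (Q r)) - smult \<alpha> (monom 1 m)"
  have degree_Q: "degree (Q r) = N - 1" if "r \<in> V" for r
    using that fin by (simp add: Q_def N_def degree_prod_sum_eq)
  have coeff_Q: "coeff (Q r) (N - 1) = 1" if "r \<in> V" for r
  proof -
    have "lead_coeff (Q r) = 1"
      by (simp add: Q_def lead_coeff_prod)
    then show ?thesis
      using degree_Q[OF that] by simp
  qed
  have poly_Q: "poly (Q r) s = (if r = s then \<alpha> else 0)" if "r \<in> V" "s \<in> V" for r s
  proof (cases "r = s")
    case False
    then show ?thesis
      using that fin by (auto simp: Q_def poly_prod intro: prod_zero bexI[of _ s])
  qed (use that prod_diff_additive_subgroup[OF diff that(1)] in \<open>simp add: Q_def \<alpha>_def poly_prod\<close>)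
  have "G = 0"
  proof (rule poly_eqI_degree[of V])
    fix s assume s: "s \<in> V"
    have "(\<Sum>r\<in>V. r ^ m * poly (Q r) s) = (\<Sum>r\<in>V. if r = s then s ^ m * \<alpha> else 0)"
      by (intro sum.cong) (auto simp: poly_Q s)
    then show "poly G s = poly 0 s"
      using fin s by (simp add: G_def poly_sum poly_monom)
  next
    have "degree G \<le> N - 1"
      unfolding G_def
    proof (intro degree_diff_le degree_sum_le fin)
      show "degree (smult (r ^ m) (Q r)) \<le> N - 1" if "r \<in> V" for r
        using degree_Q[OF that] degree_smult_le[of "r ^ m" "Q r"] by simp
      show "degree (smult \<alpha> (monom 1 m)) \<le> N - 1"
        using m degree_smult_le[of \<alpha> "monom 1 m"] by (simp add: degree_monom_eq N_def)
    qed
    then show "degree G < card V" "degree 0 < card V"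
      using m by (simp_all add: N_def)
  qed
  then have "coeff G (N - 1) = 0"
    by simp
  moreover have "coeff (monom (1::'a) m) (N - 1) = 0"
    using m by (simp add: N_def)
  moreover have "(\<Sum>r\<in>V. r ^ m * coeff (Q r) (N - 1)) = (\<Sum>r\<in>V. r ^ m)"
    by (intro sum.cong refl) (simp only: coeff_Q mult_1_right)
  ultimately show ?thesis
    by (simp add: G_def coeff_sum)
qed

lemma of_nat_card_eq_0: "of_nat CARD('a) = (0::'a::{finite,field})"
  using sum_power_additive_subgroup_eq_0[of "UNIV :: 'a set" 0] card_field_ge_2[where 'a='a]
  by simp

section \<open>The twist \<open>\<tau>\<close>\<close>

lemma to_fract_power: "to_fract (x ^ n) = to_fract x ^ n"
  by (induction n) simp_all

lemma of_nat_fract_poly: "(of_nat n :: 'a::idom poly fract) = to_fract [:of_nat n:]"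
proof -
  have "(of_nat n :: 'a poly fract) = to_fract (of_nat n)"
    by (induction n) simp_all
  then show ?thesis
    by (simp add: of_nat_poly)
qed

lemma fract_poly_power_card_add:
  fixes x y :: "'a::{finite,field} poly fract"
  shows "(x + y) ^ CARD('a) = x ^ CARD('a) + y ^ CARD('a)"
proof -
  let ?q = "CARD('a)"
  have "(x + y) ^ ?q = (\<Sum>k\<le>?q. of_nat (?q choose k) * x ^ k * y ^ (?q - k))"
    by (rule binomial_ring)
  also have "\<dots> = (\<Sum>k\<in>{0, ?q}. of_nat (?q choose k) * x ^ k * y ^ (?q - k))"
  proof (intro sum.mono_neutral_right ballI)
    fix k assume "k \<in> {..?q} - {0, ?q}"
    then show "of_nat (?q choose k) * x ^ k * y ^ (?q - k) = 0"
      by (simp add: of_nat_fract_poly of_nat_card_choose_eq_0)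
  qed auto
  finally show ?thesis
    using card_field_ge_2[where 'a='a] by (simp add: add.commute)
qed

lemma fract_poly_power_card_uminus:
  fixes x :: "'a::{finite,field} poly fract"
  shows "(- x) ^ CARD('a) = - (x ^ CARD('a))"
  using fract_poly_power_card_add[of x "- x"] card_field_ge_2[where 'a='a]
  by (simp add: eq_neg_iff_add_eq_0 add.commute power_0_left)

lemma to_fract_const_power_card: "to_fract [:c:] ^ CARD('a) = to_fract [:c::'a::{finite,field}:]"
  by (simp add: poly_const_pow power_card_eq_self flip: to_fract_power)

lemma smult_sum_right: "smult c (\<Sum>x\<in>A. f x) = (\<Sum>x\<in>A. smult c (f x))"
  by (induction A rule: infinite_finite_induct) (simp_all add: smult_add_right)

lemma tau_pCons: "tau (pCons c p) = pCons (c ^ CARD('a)) (tau p)"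
  for p :: "'a::{finite,field} poly fract poly"
  unfolding tau_def using card_field_ge_2[where 'a='a]
  by (intro map_poly_pCons) (simp add: power_0_left)

lemma tau_0 [simp]: "tau 0 = 0"
  by (simp add: tau_def)

lemma tau_add: "tau (p + q) = tau p + tau q"
  for p q :: "'a::{finite,field} poly fract poly"
  using card_field_ge_2[where 'a='a]
  by (intro poly_eqI) (simp add: tau_def coeff_map_poly power_0_left fract_poly_power_card_add)

lemma tau_smult: "tau (smult c p) = smult (c ^ CARD('a)) (tau p)"
  for p :: "'a::{finite,field} poly fract poly"
  using card_field_ge_2[where 'a='a]
  unfolding tau_def by (intro map_poly_smult) (simp_all add: power_0_left power_mult_distrib)

lemma tau_mult: "tau (p * q) = tau p * tau q"
  for p q :: "'a::{finite,field} poly fract poly"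
  by (induction p) (simp_all add: tau_pCons tau_add tau_smult)

lemma tau_1 [simp]: "tau 1 = (1 :: 'a::{finite,field} poly fract poly)"
  by (simp add: tau_def)

lemma tau_sum: "tau (\<Sum>x\<in>A. f x) = (\<Sum>x\<in>A. tau (f x))"
  by (induction A rule: infinite_finite_induct) (simp_all add: tau_add)

lemma tau_prod: "tau (\<Prod>x\<in>A. f x) = (\<Prod>x\<in>A. tau (f x))"
  by (induction A rule: infinite_finite_induct) (simp_all add: tau_mult)

lemma poly_tau: "poly (tau p) (x ^ CARD('a)) = poly p x ^ CARD('a)"
  for p :: "'a::{finite,field} poly fract poly"
  using card_field_ge_2[where 'a='a]
  by (induction p) (simp_all add: tau_pCons fract_poly_power_card_add power_mult_distrib power_0_left)

lemma tau_at_t: "tau (at_t a) = at_t a"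
  by (intro poly_eqI) (simp add: tau_def at_t_def coeff_map_poly to_fract_const_power_card)

lemma power_power_Suc: "(x ^ b ^ n) ^ b = x ^ b ^ Suc n"
  for x :: "'a::monoid_mult"
  by (simp only: power_Suc2 power_mult)

lemma funpow_tau_smult: "(tau ^^ n) (smult c p) = smult (c ^ CARD('a) ^ n) ((tau ^^ n) p)"
  for p :: "'a::{finite,field} poly fract poly"
  by (induction n) (simp_all add: tau_smult power_power_Suc del: power_Suc)

lemma funpow_tau_sum: "(tau ^^ n) (\<Sum>x\<in>A. f x) = (\<Sum>x\<in>A. (tau ^^ n) (f x))"
  by (induction n) (simp_all add: tau_sum)

lemma funpow_tau_at_t: "(tau ^^ n) (at_t a) = at_t a"
  by (induction n) (simp_all add: tau_at_t)

section \<open>The Carlitz factorials \<open>l\<^sub>d\<close> and the polynomials \<open>b\<^sub>d\<close>\<close>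

lemma theta_power_eq_iff: "(theta :: 'a::{finite,field} poly fract) ^ m = theta ^ n \<longleftrightarrow> m = n"
proof
  assume "(theta :: 'a poly fract) ^ m = theta ^ n"
  then have "([:0, 1:] :: 'a poly) ^ m = [:0, 1:] ^ n"
    by (simp add: theta_def flip: to_fract_power)
  then show "m = n"
    by (metis degree_linear_power)
qed simp

lemma card_power_eq_iff: "CARD('a::{finite,field}) ^ m = CARD('a) ^ n \<longleftrightarrow> m = n"
  using card_field_ge_2[where 'a='a] by (simp add: power_inject_exp)

lemma lfac_nonzero: "lfac d \<noteq> (0 :: 'a::{finite,field} poly fract)"
proof -
  have "theta \<noteq> (theta :: 'a poly fract) ^ CARD('a) ^ k" if "1 \<le> k" for k
    using that theta_power_eq_iff[of 1 "CARD('a) ^ k", where 'a='a]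
      card_power_eq_iff[of 0 k, where 'a='a] by auto
  then show ?thesis
    by (simp add: lfac_def)
qed

lemma lfac_Suc:
  "lfac (Suc d) = lfac d * (theta - (theta :: 'a::{finite,field} poly fract) ^ CARD('a) ^ Suc d)"
  by (simp add: lfac_def atLeastAtMostSuc_conv mult.commute)

lemma lfac_eq_prod_lessThan:
  "lfac d = (\<Prod>k<d. theta - (theta :: 'a::{finite,field} poly fract) ^ CARD('a) ^ Suc k)"
  by (induction d) (simp_all add: lfac_def lfac_Suc del: power_Suc)

lemma tau_bpoly_eq_prod:
  "tau (bpoly d) = (\<Prod>k<d. [:- ((theta :: 'a::{finite,field} poly fract) ^ CARD('a) ^ Suc k), 1:])"
  by (simp add: bpoly_def tau_prod tau_pCons fract_poly_power_card_uminus power_power_Suc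
      del: power_Suc)

lemma tau_bpoly: "tau (bpoly d :: 'a::{finite,field} poly fract poly) = smult (lfac d) (\<Sum>i\<le>d. smult (inverse (lfac i)) (bpoly i))"
proof (induction d)
  case (Suc d)
  let ?x = "(theta :: 'a poly fract) ^ CARD('a) ^ Suc d"
  have bpoly_Suc: "bpoly (Suc d) = tau (bpoly d) * [:- theta, 1:]"
    unfolding tau_bpoly_eq_prod unfolding bpoly_def
    by (subst prod.lessThan_Suc_shift) (simp add: mult.commute)
  have "tau (bpoly (Suc d)) = tau (bpoly d) * ([:- theta, 1:] + [:theta - ?x:])"
    by (simp add: tau_bpoly_eq_prod del: power_Suc)
  also have "\<dots> = bpoly (Suc d) + smult (theta - ?x) (tau (bpoly d))"
    by (simp only: bpoly_Suc distrib_left mult.commute[of _ "[:_:]"] mult_smult_left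
        smult_one flip: smult_conv_map_poly) simp
  also have "\<dots> = smult (lfac (Suc d)) (\<Sum>i\<le>Suc d. smult (inverse (lfac i)) (bpoly i))"
  proof -
    have "smult (theta - ?x) (smult (lfac d) S) = smult (lfac (Suc d)) S" for S
      by (simp add: lfac_Suc mult.commute)
    then show ?thesis
      by (simp add: Suc.IH lfac_nonzero smult_add_right add.commute)
  qed
  finally show ?case .
qed (simp add: lfac_def bpoly_def)

section \<open>Chains\<close>

definition chain_weight :: "nat \<Rightarrow> (nat \<Rightarrow> nat) \<Rightarrow> 'a::{finite,field} poly fract" where
  "chain_weight n i = (\<Prod>j\<in>{1..<n}.
     lfac (i j) powi (int (CARD('a) ^ (n - 1 - j)) - int (CARD('a) ^ (n - j)))) * lfac (i n) powi (-1)"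

lemma chain_sum_eq: "chain_sum n d = (\<Sum>i\<in>chains n d. smult (chain_weight n i) (bpoly (i n)))"
  by (simp add: chain_sum_def chain_weight_def)

lemma finite_chains: "finite (chains n d)"
  unfolding chains_def by (rule finite_subset[of _ "{1..n} \<rightarrow>\<^sub>E {0..d}"]) (auto intro: finite_PiE)

lemma chains_antimono:
  assumes "i \<in> chains n d" "1 \<le> a" "a \<le> b" "b \<le> n"
  shows "i b \<le> i a"
  using assms(3,4)
proof (induction b rule: dec_induct)
  case (step m)
  then have "i (Suc m) \<le> i m"
    using assms(1,2) by (auto simp: chains_def)
  with step show ?case
    by simp
qed simp

definition chain_tail :: "nat \<Rightarrow> (nat \<Rightarrow> nat) \<Rightarrow> nat \<Rightarrow> nat" where
  "chain_tail n i = restrict (i \<circ> Suc) {1..n}"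

definition chain_cons :: "nat \<Rightarrow> nat \<Rightarrow> (nat \<Rightarrow> nat) \<Rightarrow> nat \<Rightarrow> nat" where
  "chain_cons n k c = restrict (\<lambda>j. if j = 1 then k else c (j - 1)) {1..Suc n}"

lemma chain_tail_mem_chains:
  assumes "i \<in> chains (Suc n) d"
  shows "chain_tail n i \<in> chains n (i 1)"
proof -
  have "i (Suc j) \<le> i 1" if "j \<in> {1..n}" for j
    using chains_antimono[OF assms, of 1 "Suc j"] that by simp
  then show ?thesis
    using assms by (auto simp: chains_def chain_tail_def PiE_iff)
qed

lemma chain_cons_mem_chains:
  assumes c: "c \<in> chains n k" and "k \<le> d"
  shows "chain_cons n k c \<in> chains (Suc n) d"
proof -
  have c_le: "c j \<le> k" if "j \<in> {1..n}" for j
    using c that by (auto simp: chains_def PiE_iff)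
  have c_step: "c (Suc j) \<le> c j" if "j \<in> {1..<n}" for j
    using c that by (auto simp: chains_def)
  have le_k: "chain_cons n k c j \<le> k" if j: "j \<in> {1..Suc n}" for j
  proof (cases "j = 1")
    case False
    then obtain m where "j = Suc m" "m \<in> {1..n}"
      using j by (cases j) auto
    then show ?thesis
      using c_le[of m] by (simp add: chain_cons_def)
  qed (simp add: chain_cons_def)
  have "chain_cons n k c (Suc j) \<le> chain_cons n k c j" if j: "j \<in> {1..<Suc n}" for j
  proof (cases "j = 1")
    case True
    then show ?thesis
      using j c_le[of 1] by (simp add: chain_cons_def)
  next
    case False
    then obtain m where "j = Suc m" "m \<in> {1..<n}"
      using j by (cases j) auto
    then show ?thesis
      using c_step[of m] by (simp add: chain_cons_def)
  qed
  moreover have "chain_cons n k c j \<le> d" if "j \<in> {1..Suc n}" for j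
    using le_k[OF that] \<open>k \<le> d\<close> by simp
  moreover have "chain_cons n k c \<in> extensional {1..Suc n}"
    by (simp add: chain_cons_def)
  ultimately show ?thesis
    by (simp add: chains_def PiE_iff)
qed

lemma bij_betw_chains_Suc:
  "bij_betw (\<lambda>i. (i 1, chain_tail n i)) (chains (Suc n) d) (SIGMA k:{..d}. chains n k)"
proof (rule bij_betwI[where g = "\<lambda>(k, c). chain_cons n k c"])
  show "(\<lambda>i. (i 1, chain_tail n i)) \<in> chains (Suc n) d \<rightarrow> (SIGMA k:{..d}. chains n k)"
  proof
    fix i assume i: "i \<in> chains (Suc n) d"
    then have "i 1 \<le> d"
      by (auto simp: chains_def PiE_iff)
    with chain_tail_mem_chains[OF i] show "(i 1, chain_tail n i) \<in> (SIGMA k:{..d}. chains n k)"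
      by simp
  qed
  show "(\<lambda>(k, c). chain_cons n k c) \<in> (SIGMA k:{..d}. chains n k) \<rightarrow> chains (Suc n) d"
    by (auto intro: chain_cons_mem_chains)
  show "(case (i 1, chain_tail n i) of (k, c) \<Rightarrow> chain_cons n k c) = i" if "i \<in> chains (Suc n) d" for i
    using that by (auto simp: chains_def chain_tail_def chain_cons_def PiE_iff fun_eq_iff
      extensional_def not_less_eq_eq elim: ballE[where x = "_ - 1"])
  show "(\<lambda>i. (i 1, chain_tail n i)) (case kc of (k, c) \<Rightarrow> chain_cons n k c) = kc"
    if "kc \<in> (SIGMA k:{..d}. chains n k)" for kc
    using that by (auto simp: chains_def chain_tail_def chain_cons_def PiE_iff fun_eq_iff extensional_def)
qed

lemma chain_weight_Suc:
  assumes "1 \<le> n"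
  shows "chain_weight (Suc n) i = lfac (i 1) powi (int (CARD('a) ^ (n - 1)) - int (CARD('a) ^ n))
    * (chain_weight n (chain_tail n i) :: 'a::{finite,field} poly fract)"
proof -
  let ?e = "\<lambda>n j. int (CARD('a) ^ (n - 1 - j)) - int (CARD('a) ^ (n - j))"
  let ?f = "\<lambda>j. (lfac (i j) :: 'a poly fract) powi ?e (Suc n) j"
  have "(\<Prod>j\<in>{1..<Suc n}. ?f j) = ?f 1 * (\<Prod>j\<in>{1..<n}. ?f (Suc j))"
    using assms by (subst prod.atLeast_Suc_lessThan) (simp_all only: prod.shift_bounds_Suc_ivl)
  also have "(\<Prod>j\<in>{1..<n}. ?f (Suc j)) = (\<Prod>j\<in>{1..<n}. lfac (chain_tail n i j) powi ?e n j)"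
    by (intro prod.cong) (auto simp: chain_tail_def)
  finally show ?thesis
    using assms by (simp add: chain_weight_def chain_tail_def mult.assoc)
qed

lemma chain_sum_1: "chain_sum 1 d = (\<Sum>i\<le>d. smult (inverse (lfac i)) (bpoly i))"
proof -
  have "bij_betw (\<lambda>i. i 1) (chains 1 d) {..d}"
    by (rule bij_betwI[where g = "\<lambda>k. restrict (\<lambda>_. k) {1}"])
      (auto simp: chains_def PiE_iff fun_eq_iff extensional_def)
  then show ?thesis
    by (simp add: chain_sum_eq chain_weight_def power_int_minus flip: sum.reindex_bij_betw)
qed

lemma chain_sum_Suc:
  assumes "1 \<le> n"
  shows "chain_sum (Suc n) d = (\<Sum>k\<le>d.
    smult (lfac k powi (int (CARD('a) ^ (n - 1)) - int (CARD('a) ^ n)))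
      (chain_sum n k :: 'a::{finite,field} poly fract poly))"
proof -
  let ?e = "\<lambda>k. (lfac k :: 'a poly fract) powi (int (CARD('a) ^ (n - 1)) - int (CARD('a) ^ n))"
  let ?g = "\<lambda>(k, c). smult (?e k * chain_weight n c) (bpoly (c n))"
  have "chain_sum (Suc n) d = (\<Sum>i\<in>chains (Suc n) d. ?g (i 1, chain_tail n i))"
    unfolding chain_sum_eq using assms by (intro sum.cong) (simp_all add: chain_weight_Suc chain_tail_def)
  also have "\<dots> = (\<Sum>kc\<in>(SIGMA k:{..d}. chains n k). ?g kc)"
    using bij_betw_chains_Suc by (rule sum.reindex_bij_betw)
  also have "\<dots> = (\<Sum>k\<le>d. \<Sum>c\<in>chains n k. ?g (k, c))"
    by (simp add: sum.Sigma finite_chains)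
  finally show ?thesis
    by (simp add: chain_sum_eq smult_sum_right smult_smult)
qed

section \<open>Iterated twists of \<open>b\<^sub>d\<close>\<close>

lemma inverse_power_mult_power:
  fixes l :: "'a::field"
  assumes "l \<noteq> 0"
  shows "inverse l ^ m * l ^ k = l powi (int k - int m)"
  using assms by (simp add: power_int_diff power_inverse divide_inverse mult.commute)

lemma funpow_tau_bpoly:
  assumes "1 \<le> n"
  shows "(tau ^^ n) (bpoly d :: 'a::{finite,field} poly fract poly)
    = smult (lfac d ^ CARD('a) ^ (n - 1)) (chain_sum n d)"
  using assms
proof (induction n arbitrary: d rule: nat_induct_at_least)
  case base
  show ?case
    using chain_sum_1[of d, where 'a='a] by (simp add: tau_bpoly)
next
  case (Suc n)
  let ?q = "CARD('a)"
  have "(tau ^^ Suc n) (bpoly d :: 'a poly fract poly) = (tau ^^ n) (tau (bpoly d))"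
    by (simp only: funpow_Suc_right o_apply)
  also have "\<dots> = smult (lfac d ^ ?q ^ n)
      (\<Sum>i\<le>d. smult (inverse (lfac i) ^ ?q ^ n) ((tau ^^ n) (bpoly i)))"
    by (simp add: tau_bpoly funpow_tau_smult funpow_tau_sum)
  also have "\<dots> = smult (lfac d ^ ?q ^ n)
      (\<Sum>i\<le>d. smult (lfac i powi (int (?q ^ (n - 1)) - int (?q ^ n))) (chain_sum n i))"
    by (simp add: Suc.IH smult_smult inverse_power_mult_power lfac_nonzero)
  also have "\<dots> = smult (lfac d ^ ?q ^ (Suc n - 1)) (chain_sum (Suc n) d)"
    by (simp add: chain_sum_Suc[OF Suc.hyps])
  finally show ?case .
qed

section \<open>Sums of \<open>a(t)/a\<close>\<close>

definition polys_deg_less :: "nat \<Rightarrow> 'a::zero poly set" where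
  "polys_deg_less n = {p. \<forall>i\<ge>n. coeff p i = 0}"

lemma mem_polys_deg_less_iff: "p \<in> polys_deg_less n \<longleftrightarrow> p = 0 \<or> degree p < n"
  by (auto simp: polys_deg_less_def intro: coeff_eq_0) (metis leading_coeff_0_iff not_less)

lemma zero_mem_polys_deg_less: "0 \<in> polys_deg_less n"
  by (simp add: polys_deg_less_def)

lemma diff_mem_polys_deg_less:
  "p \<in> polys_deg_less n \<Longrightarrow> q \<in> polys_deg_less n \<Longrightarrow> p - q \<in> polys_deg_less n"
  by (simp add: polys_deg_less_def)

lemma polys_deg_less_0: "polys_deg_less 0 = {0}"
  by (auto simp: polys_deg_less_def poly_eq_iff)

lemma polys_deg_less_Suc: "polys_deg_less (Suc n) = (\<lambda>(c, p). pCons c p) ` (UNIV \<times> polys_deg_less n)"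
proof (intro equalityI subsetI)
  fix p :: "'a poly" assume "p \<in> polys_deg_less (Suc n)"
  then show "p \<in> (\<lambda>(c, p). pCons c p) ` (UNIV \<times> polys_deg_less n)"
    by (cases p) (force simp: polys_deg_less_def)
qed (auto simp: polys_deg_less_def coeff_pCons split: nat.splits)

lemma finite_card_polys_deg_less:
  "finite (polys_deg_less n :: 'a::{finite,zero} poly set) \<and> card (polys_deg_less n :: 'a poly set) = CARD('a) ^ n"
proof (induction n)
  case 0
  then show ?case
    by (simp add: polys_deg_less_0)
next
  case (Suc n)
  have "inj_on (\<lambda>(c, p). pCons c p) (UNIV \<times> (polys_deg_less n :: 'a poly set))"
    by (auto simp: inj_on_def)
  then show ?case
    using Suc by (simp add: polys_deg_less_Suc card_image card_cartesian_product)
qed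

lemma finite_polys_deg_less: "finite (polys_deg_less n :: 'a::{finite,zero} poly set)"
  and card_polys_deg_less: "card (polys_deg_less n :: 'a::{finite,zero} poly set) = CARD('a) ^ n"
  using finite_card_polys_deg_less by blast+

lemma polys_deg_less_Suc_minus_0:
  "polys_deg_less (Suc d) - {0} = (polys_deg_less d - {0}) \<union> {p. p \<noteq> 0 \<and> degree p = d}"
  by (auto simp: mem_polys_deg_less_iff)

lemma sum_nonzero_degree_eq:
  fixes f :: "'a::{finite,field} poly \<Rightarrow> 'b::comm_semiring_1"
  assumes "\<And>c p. c \<noteq> 0 \<Longrightarrow> f (smult c p) = f p"
  shows "(\<Sum>p | p \<noteq> 0 \<and> degree p = d. f p) = of_nat (CARD('a) - 1) * (\<Sum>p\<in>monic_deg d. f p)"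
proof -
  have "bij_betw (\<lambda>(c, p). smult c p) ((UNIV - {0}) \<times> monic_deg d) {p. p \<noteq> 0 \<and> degree p = d}"
    by (rule bij_betwI[where g = "\<lambda>p. (lead_coeff p, smult (inverse (lead_coeff p)) p)"])
      (auto simp: monic_deg_def)
  then have "(\<Sum>p | p \<noteq> 0 \<and> degree p = d. f p)
      = (\<Sum>cp\<in>(UNIV - {0}) \<times> monic_deg d. f (case cp of (c, p) \<Rightarrow> smult c p))"
    by (rule sum.reindex_bij_betw[symmetric])
  also have "\<dots> = (\<Sum>(c :: 'a, p)\<in>(UNIV - {0}) \<times> monic_deg d. f p)"
    by (intro sum.cong refl) (auto intro!: assms)
  also have "\<dots> = of_nat (CARD('a) - 1) * (\<Sum>p\<in>monic_deg d. f p)"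
    by (simp add: sum.cartesian_product[symmetric] card_Diff_singleton)
  finally show ?thesis .
qed

definition at_t_quot :: "'a::{finite,field} poly \<Rightarrow> 'a poly fract poly" where
  "at_t_quot a = smult (inverse (to_fract a)) (at_t a)"

definition at_t_quot_sum :: "nat \<Rightarrow> 'a::{finite,field} poly fract poly" where
  "at_t_quot_sum n = (\<Sum>b\<in>polys_deg_less n - {0}. at_t_quot b)"

lemma at_t_smult: "at_t (smult c a) = smult (to_fract [:c:]) (at_t a)"
  unfolding at_t_def by (rule map_poly_smult) (simp_all flip: to_fract_mult)

lemma to_fract_smult: "to_fract (smult c a) = to_fract [:c:] * to_fract a"
  by (simp flip: to_fract_mult)

lemma at_t_quot_smult: "c \<noteq> 0 \<Longrightarrow> at_t_quot (smult c a) = at_t_quot a"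
  by (cases "a = 0") (simp_all add: at_t_quot_def at_t_smult to_fract_smult smult_smult field_simps)

lemma at_t_quot_sum_Suc:
  "at_t_quot_sum (Suc d) = at_t_quot_sum d - (\<Sum>a\<in>monic_deg d. at_t_quot a :: 'a::{finite,field} poly fract poly)"
proof -
  have "(of_nat CARD('a) :: 'a poly fract poly) = 0"
    by (simp add: of_nat_poly of_nat_fract_poly of_nat_card_eq_0)
  then have "(of_nat (CARD('a) - 1) :: 'a poly fract poly) = - 1"
    using card_field_ge_2[where 'a='a] by (simp add: of_nat_diff)
  moreover have "finite {p :: 'a poly. p \<noteq> 0 \<and> degree p = d}"
    by (rule finite_subset[OF _ finite_polys_deg_less[of "Suc d"]]) (auto simp: mem_polys_deg_less_iff)
  ultimately show ?thesis
    unfolding at_t_quot_sum_def polys_deg_less_Suc_minus_0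
    by (subst sum.union_disjoint)
      (auto simp: finite_polys_deg_less mem_polys_deg_less_iff sum_nonzero_degree_eq at_t_quot_smult)
qed

lemma poly_at_t_theta: "poly (at_t b) theta = to_fract (b :: 'a::{finite,field} poly)"
proof (induction b)
  case (pCons a p)
  have "to_fract (pCons a p) = to_fract [:a:] + theta * to_fract p"
    by (simp add: theta_def flip: to_fract_mult to_fract_add)
  moreover have "at_t (pCons a p) = pCons (to_fract [:a:]) (at_t p)"
    unfolding at_t_def by (rule map_poly_pCons) simp
  ultimately show ?case
    by (simp add: pCons.IH)
qed (simp add: at_t_def)

lemma poly_at_t_theta_power:
  "poly (at_t b) (theta ^ CARD('a) ^ k) = to_fract (b :: 'a::{finite,field} poly) ^ CARD('a) ^ k"
proof (induction k)
  case (Suc k)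
  have "poly (at_t b) (theta ^ CARD('a) ^ Suc k) = poly (tau (at_t b)) ((theta ^ CARD('a) ^ k) ^ CARD('a))"
    by (simp only: tau_at_t power_power_Suc)
  also have "\<dots> = to_fract b ^ CARD('a) ^ Suc k"
    by (subst poly_tau) (simp only: Suc.IH power_power_Suc)
  finally show ?case .
qed (simp add: poly_at_t_theta)

text \<open>The power sum over the whole space vanishes; removing \<open>b = 0\<close> subtracts
  \<open>0 ^ (q ^ k - 1)\<close>, which is \<open>1\<close> only for \<open>k = 0\<close>.\<close>
lemma sum_power_polys_deg_less:
  assumes "k < n"
  shows "(\<Sum>b\<in>polys_deg_less n - {0}. to_fract b ^ (CARD('a) ^ k - 1))
    = (if k = 0 then - 1 else (0 :: 'a::{finite,field} poly fract))"
proof -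
  let ?q = "CARD('a)" and ?V = "to_fract ` (polys_deg_less n :: 'a poly set)"
  define m where "m = ?q ^ k - 1"
  have "m + 1 < card ?V"
    using assms card_field_ge_2[where 'a='a]
    by (simp add: m_def card_image inj_on_def card_polys_deg_less power_strict_increasing)
  moreover have "x - y \<in> ?V" if "x \<in> ?V" "y \<in> ?V" for x y
    using that diff_mem_polys_deg_less by (auto simp flip: to_fract_diff intro!: imageI)
  ultimately have "(\<Sum>r\<in>?V. r ^ m) = 0"
    by (intro sum_power_additive_subgroup_eq_0 finite_imageI finite_polys_deg_less) auto
  moreover have "(\<Sum>r\<in>?V. r ^ m) = 0 ^ m + (\<Sum>b\<in>polys_deg_less n - {0}. to_fract b ^ m)"
    by (simp add: sum.reindex inj_on_def sum.remove[OF finite_polys_deg_less zero_mem_polys_deg_less])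
  ultimately have "0 ^ m + (\<Sum>b\<in>polys_deg_less n - {0}. to_fract (b :: 'a poly) ^ m) = 0"
    by simp
  then have "(\<Sum>b\<in>polys_deg_less n - {0}. to_fract (b :: 'a poly) ^ m) = - (0 ^ m)"
    by (rule add_eq_0_iff[THEN iffD1])
  moreover have "m = 0 \<longleftrightarrow> k = 0"
    using one_less_power[of ?q k] card_field_ge_2[where 'a='a] by (cases "k = 0") (auto simp: m_def)
  ultimately show ?thesis
    unfolding m_def[symmetric] by (cases "k = 0") simp_all
qed

lemma poly_at_t_quot_sum:
  assumes "k < n"
  shows "poly (at_t_quot_sum n) (theta ^ CARD('a) ^ k)
    = (if k = 0 then - 1 else (0 :: 'a::{finite,field} poly fract))"
proof -
  have "to_fract b ^ CARD('a) ^ k = to_fract b * to_fract b ^ (CARD('a) ^ k - 1)" for b :: "'a poly"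
    using card_field_ge_2[where 'a='a] by (simp flip: power_Suc)
  then have "poly (at_t_quot_sum n :: 'a poly fract poly) (theta ^ CARD('a) ^ k)
      = (\<Sum>b\<in>polys_deg_less n - {0}. to_fract b ^ (CARD('a) ^ k - 1))"
    unfolding at_t_quot_sum_def at_t_quot_def poly_sum poly_smult poly_at_t_theta_power
    by (intro sum.cong) simp_all
  with sum_power_polys_deg_less[OF assms] show ?thesis
    by simp
qed

lemma poly_tau_bpoly:
  assumes "k \<le> d"
  shows "poly (tau (bpoly d)) (theta ^ CARD('a) ^ k)
    = (if k = 0 then lfac d else (0 :: 'a::{finite,field} poly fract))"
proof (cases k)
  case (Suc j)
  then show ?thesis
    using assms by (auto simp: tau_bpoly_eq_prod poly_prod intro: prod_zero bexI[of _ j] simp del: power_Suc)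
qed (simp add: tau_bpoly_eq_prod poly_prod lfac_eq_prod_lessThan del: power_Suc)

lemma at_t_quot_sum_Suc_eq_tau_bpoly:
  "at_t_quot_sum (Suc d) = smult (- inverse (lfac d)) (tau (bpoly d :: 'a::{finite,field} poly fract poly))"
proof -
  define A where "A = (\<lambda>k. (theta :: 'a poly fract) ^ CARD('a) ^ k) ` {..d}"
  have "inj_on (\<lambda>k. (theta :: 'a poly fract) ^ CARD('a) ^ k) {..d}"
    by (rule inj_onI) (simp add: theta_power_eq_iff card_power_eq_iff)
  then have card_A: "card A = Suc d"
    by (simp add: A_def card_image)
  have degree_at_t_quot: "degree (at_t_quot (b :: 'a poly)) \<le> d"
    if "b \<in> polys_deg_less (Suc d) - {0}" for b
  proof -
    have "degree (at_t_quot b) \<le> degree b"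
      unfolding at_t_quot_def at_t_def by (rule order_trans[OF degree_smult_le map_poly_degree_leq])
    then show ?thesis
      using that by (auto simp: mem_polys_deg_less_iff)
  qed
  have "degree (at_t_quot_sum (Suc d) :: 'a poly fract poly) \<le> d"
    unfolding at_t_quot_sum_def
    by (intro degree_sum_le degree_at_t_quot) (simp_all add: finite_polys_deg_less)
  moreover have "degree (tau (bpoly d) :: 'a poly fract poly) \<le> d"
    unfolding tau_bpoly_eq_prod by (rule order_trans[OF degree_prod_sum_le]) simp_all
  then have "degree (smult (- inverse (lfac d)) (tau (bpoly d)) :: 'a poly fract poly) \<le> d"
    using degree_smult_le order_trans by blast
  moreover have "poly (at_t_quot_sum (Suc d)) x = poly (smult (- inverse (lfac d)) (tau (bpoly d))) x"
    if "x \<in> A" for x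
    using that by (auto simp: A_def poly_at_t_quot_sum poly_tau_bpoly lfac_nonzero)
  ultimately show ?thesis
    using card_A by (intro poly_eqI_degree[of A]) auto
qed

lemma at_t_quot_sum_eq:
  "at_t_quot_sum d = - (\<Sum>i<d. smult (inverse (lfac i)) (bpoly i :: 'a::{finite,field} poly fract poly))"
proof (cases d)
  case 0
  then show ?thesis
    by (simp add: at_t_quot_sum_def polys_deg_less_0)
next
  case (Suc e)
  then show ?thesis
    by (simp add: at_t_quot_sum_Suc_eq_tau_bpoly tau_bpoly lfac_nonzero lessThan_Suc_atMost
        smult_sum_right sum_negf mult.assoc[symmetric])
qed

theorem sum_monic_at_t_quot:
  "(\<Sum>a\<in>monic_deg d. at_t_quot a) = smult (inverse (lfac d)) (bpoly d :: 'a::{finite,field} poly fract poly)"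
  using at_t_quot_sum_Suc[of d, where 'a='a] by (simp add: at_t_quot_sum_eq)

theorem proposition6p1:
  fixes n d :: nat
  assumes "n \<ge> 1"
  shows "(tau ^^ n) (bpoly d :: 'a::{finite,field} poly fract poly)
           = smult (lfac d ^ (CARD('a) ^ (n - 1))) (chain_sum n d)
       \<and> (\<Sum>a\<in>monic_deg d. smult (inverse (to_fract a ^ (CARD('a) ^ n))) (at_t a))
           = smult ((lfac d :: 'a poly fract) powi (int (CARD('a) ^ (n - 1)) - int (CARD('a) ^ n)))
               (chain_sum n d)"
proof -
  have power_bpoly: "(tau ^^ n) (bpoly d :: 'a poly fract poly)
      = smult (lfac d ^ (CARD('a) ^ (n - 1))) (chain_sum n d)"
    using assms by (rule funpow_tau_bpoly)
  have "(\<Sum>a\<in>monic_deg d. smult (inverse (to_fract a ^ CARD('a) ^ n)) (at_t a))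
      = (tau ^^ n) (\<Sum>a\<in>monic_deg d. at_t_quot a :: 'a poly fract poly)"
    by (simp add: at_t_quot_def funpow_tau_sum funpow_tau_smult funpow_tau_at_t power_inverse)
  also have "\<dots> = smult (inverse (lfac d) ^ CARD('a) ^ n) ((tau ^^ n) (bpoly d))"
    by (simp add: sum_monic_at_t_quot funpow_tau_smult)
  also have "\<dots> = smult (lfac d powi (int (CARD('a) ^ (n - 1)) - int (CARD('a) ^ n))) (chain_sum n d)"
    by (simp add: power_bpoly smult_smult inverse_power_mult_power lfac_nonzero)
  finally show ?thesis
    using power_bpoly by blast
qed

end
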